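(* Let $g\ge1$ and let $\alpha_1,\dots,\alpha_{2g-1},\alpha$ be mutually distinct complex numbers. Let $\widehat q^{(g)0}_{ij}$ and $\widehat q^{(g-1)}_{ij}$ be defined by the expansions (in $z_1,z_2$ with $x_k=z_k^{-2}$) $$\Big(\frac1{2(x_1-x_2)^2}+\frac{H_g(x_1,x_2)}{4(x_1-x_2)^2y^{(g)}_1y^{(g)}_2}\Big)dx_1dx_2=\Big(\frac1{(z_1-z_2)^2}+\sum_{i,j\ge1}\widehat q^{(g)0}_{ij}z_1^{i-1}z_2^{j-1}\Big)dz_1dz_2,$$ $$\Big(\frac1{2(x_1-x_2)^2}+\frac{H_{g-1}(x_1,x_2)}{4(x_1-x_2)^2y^{(g-1)}_1y^{(g-1)}_2}\Big)dx_1dx_2=\Big(\frac1{(z_1-z_2)^2}+\sum_{i,j\ge1}\widehat q^{(g-1)}_{ij}z_1^{i-1}z_2^{j-1}\Big)dz_1dz_2,$$ and put $Q_{ij}=-\widehat q^{(g)0}_{ij}+\widehat q^{(g-1)}_{ij}$. Then for all $i,j\ge0$, $$Q_{2i+1,2j+1}=-\alpha\sum_{k=0}^{g-1}\tilde\mu_{4k}\,s_{(i-k)}(\Lambda)\,s_{(j-k)}(\Lambda).$$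
   Context: $f_{g-1}(x)=\prod_{j=1}^{2g-1}(x-\alpha_j)=\sum_{i=0}^{2g-1}\tilde\mu_{4g-2-2i}x^i$ and $f_g(x)=(x-\alpha)^2f_{g-1}(x)=\sum_{i=0}^{2g+1}\mu_{4g+2-2i}x^i$, with $\mu_k,\tilde\mu_k=0$ for indices outside these ranges. $H_g(x_1,x_2)=\sum_{i=0}^g(x_1x_2)^i(2\mu_{4g+2-4i}+\mu_{4g-4i}(x_1+x_2))$, $H_{g-1}(x_1,x_2)=\sum_{i=0}^{g-1}(x_1x_2)^i(2\tilde\mu_{4g-2-4i}+\tilde\mu_{4g-4-4i}(x_1+x_2))$. $F_0(z)=(\prod_{j=1}^{2g-1}(1-\alpha_jz^2))^{1/2}$ with $F_0(0)=1$, $F(z)=(1-\alpha z^2)F_0(z)$, $y^{(g-1)}_k=z_k^{-(2g-1)}F_0(z_k)$, $y^{(g)}_k=z_k^{-(2g+1)}F(z_k)$. $\Lambda=(\Lambda_1,\Lambda_2,\dots)$ with $\Lambda_n=\frac1{2n}(2\alpha^n+\sum_{j=1}^{2g-1}\alpha_j^n)$; Schur polynomials $s_{(n)}$ are defined by $\exp(\sum_{i\ge1}t_ik^i)=\sum_{n\ge0}s_{(n)}(t)k^n$, and $s_{(n)}=0$ for $n<0$. *)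

theory Defs
  imports "HOL-Analysis.Analysis" "HOL-Computational_Algebra.Formal_Power_Series"
    "HOL-Computational_Algebra.Polynomial"
begin

definition fpoly :: "(nat \<Rightarrow> complex) \<Rightarrow> nat \<Rightarrow> complex poly" where
  "fpoly al n = (\<Prod>j=1..n. [:- al j, 1:])"

definition mucoef :: "nat \<Rightarrow> complex poly \<Rightarrow> nat \<Rightarrow> complex" where
  "mucoef N p k = (if even k \<and> k div 2 \<le> N then coeff p (N - k div 2) else 0)"

definition Hfun :: "nat \<Rightarrow> (nat \<Rightarrow> complex) \<Rightarrow> complex \<Rightarrow> complex \<Rightarrow> complex" where
  "Hfun h mu x1 x2 = (\<Sum>i=0..h. (x1 * x2) ^ i * (2 * mu (4*h + 2 - 4*i) + mu (4*h - 4*i) * (x1 + x2)))"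

text \<open>F_0(z) = (prod_{j=1}^{2g-1}(1 - alpha_j z^2))^{1/2}, the branch with F_0(0) = 1
  (near z = 0 this is the principal square root).\<close>
definition F0fun :: "(nat \<Rightarrow> complex) \<Rightarrow> nat \<Rightarrow> complex \<Rightarrow> complex" where
  "F0fun al g z = csqrt (\<Prod>j=1..2*g-1. 1 - al j * z^2)"

definition Lam :: "(nat \<Rightarrow> complex) \<Rightarrow> complex \<Rightarrow> nat \<Rightarrow> nat \<Rightarrow> complex" where
  "Lam al a g n = (2 * a ^ n + (\<Sum>j=1..2*g-1. al j ^ n)) / (2 * of_nat n)"

definition schur :: "(nat \<Rightarrow> complex) \<Rightarrow> int \<Rightarrow> complex" where
  "schur t m = (if m < 0 then 0 else
      fps_nth (fps_exp 1 oo Abs_fps (\<lambda>n. if n = 0 then 0 else t n)) (nat m))"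

text \<open>The expansion defining qhat: with x_k = z_k^{-2}, dx_k = -2 z_k^{-3} dz_k,
  (1/(2(x1-x2)^2) + H(x1,x2)/(4(x1-x2)^2 y(z1) y(z2))) dx1 dx2
     = (1/(z1-z2)^2 + sum_{i,j>=1} q_ij z1^(i-1) z2^(j-1)) dz1 dz2
  for all z1, z2 in a punctured neighbourhood of 0 (away from x1 = x2),
  the double series converging (absolutely).\<close>
definition expansion ::
  "(complex \<Rightarrow> complex \<Rightarrow> complex) \<Rightarrow> (complex \<Rightarrow> complex) \<Rightarrow> (nat \<Rightarrow> nat \<Rightarrow> complex) \<Rightarrow> bool" where
  "expansion H y q \<longleftrightarrow> (\<exists>r>0. \<forall>z1 z2. z1 \<noteq> 0 \<and> z2 \<noteq> 0 \<and> norm z1 < r \<and> norm z2 < r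
      \<and> z1^2 \<noteq> z2^2 \<longrightarrow>
     (let x1 = 1 / z1^2; x2 = 1 / z2^2 in
      ((\<lambda>(i,j). q i j * z1 ^ (i - 1) * z2 ^ (j - 1)) has_sum
        ((1 / (2 * (x1 - x2)^2) + H x1 x2 / (4 * (x1 - x2)^2 * y z1 * y z2))
           * ((-2 / z1^3) * (-2 / z2^3)) - 1 / (z1 - z2)^2)) ({1..} \<times> {1..})))"

end

theory Submission
  imports Defs "HOL-Complex_Analysis.Complex_Analysis"
begin

text \<open>
  Put \<open>x = 1/z^2\<close>. Passing from \<open>f_{g-1}\<close> to \<open>f_g = (x - \<alpha>)^2 f_{g-1}\<close> changes \<open>H\<close> by
  \<open>H_g(x1,x2) = (x1 - \<alpha>)(x2 - \<alpha>) H_{g-1}(x1,x2) + \<alpha> (x1 - x2)^2 O(x1 x2)\<close>, where the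
  polynomial \<open>O(t) = \<Sum>_k \<mu>~_{4k} t^{g-1-k}\<close> collects the odd coefficients of \<open>f_{g-1}\<close>,
  and \<open>y^(g) = (x - \<alpha>) y^(g-1)\<close>. So the double poles on the diagonal cancel in the difference
  of the two bidifferentials, which is \<open>-\<alpha> (\<Sum>_k \<mu>~_{4k} (z1 z2)^{2k}) \<phi>(z1) \<phi>(z2)\<close> with
  \<open>\<phi>(z) = 1/((1 - \<alpha> z^2) F_0(z))\<close>.
  Twice the logarithmic derivative of \<open>exp (\<Sum>_n \<Lambda>_n u^n)\<close> is that of
  \<open>(1 - \<alpha> u)^{-2} \<Prod>_j (1 - \<alpha>_j u)^{-1}\<close>, so \<open>\<Sum>_n s_(n)(\<Lambda>) u^n\<close> is the power series of
  \<open>\<phi>(\<surd>u)\<close>. Expanding \<open>\<phi>(z1) \<phi>(z2)\<close> in \<open>z1^2, z2^2\<close> and comparing the coefficients of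
  the two double power series gives the formula.
\<close>

section \<open>Even and odd parts of polynomials\<close>

definition poly_even :: "'a::zero poly \<Rightarrow> 'a poly" where
  "poly_even p = Poly (map (\<lambda>i. coeff p (2 * i)) [0..<Suc (degree p)])"

definition poly_odd :: "'a::zero poly \<Rightarrow> 'a poly" where
  "poly_odd p = Poly (map (\<lambda>i. coeff p (2 * i + 1)) [0..<Suc (degree p)])"

lemma coeff_poly_even [simp]: "coeff (poly_even p) i = coeff p (2 * i)"
  by (auto simp: poly_even_def nth_default_def coeff_eq_0 simp del: upt_Suc)

lemma coeff_poly_odd [simp]: "coeff (poly_odd p) i = coeff p (2 * i + 1)"
  by (auto simp: poly_odd_def nth_default_def coeff_eq_0 simp del: upt_Suc)

lemma poly_even_add: "poly_even (p + q) = poly_even p + poly_even q"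
  and poly_odd_add: "poly_odd (p + q) = poly_odd p + poly_odd q"
  and poly_even_diff: "poly_even (r - s) = poly_even r - poly_even s"
  and poly_odd_diff: "poly_odd (r - s) = poly_odd r - poly_odd s"
  and poly_even_smult: "poly_even (smult c p) = smult c (poly_even p)"
  and poly_odd_smult: "poly_odd (smult c p) = smult c (poly_odd p)"
  for p q :: "'a::comm_semiring_0 poly" and r s :: "'b::comm_ring poly"
  by (auto intro: poly_eqI)

lemma poly_even_pCons_0: "poly_even (pCons 0 p) = pCons 0 (poly_odd p)"
  and poly_odd_pCons_0: "poly_odd (pCons 0 p) = poly_even p"
  by (auto intro!: poly_eqI simp: coeff_pCons split: nat.split)

lemma poly_even_odd_square_factor:
  fixes f :: "'a::comm_ring_1 poly"
  shows "poly_even ([:- a, 1:]^2 * f)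
           = [:a^2, 1:] * poly_even f - smult (2 * a) (pCons 0 (poly_odd f))" (is ?even)
    and "poly_odd ([:- a, 1:]^2 * f) = [:a^2, 1:] * poly_odd f - smult (2 * a) (poly_even f)"
      (is ?odd)
proof -
  have "[:- a, 1:]^2 * f = pCons 0 (pCons 0 f) - smult (2 * a) (pCons 0 f) + smult (a^2) f"
    by (simp add: power2_eq_square smult_add_right algebra_simps)
  then show ?even and ?odd
    by (simp_all add: poly_even_add poly_odd_add poly_even_diff poly_odd_diff poly_even_smult
        poly_odd_smult poly_even_pCons_0 poly_odd_pCons_0 algebra_simps)
qed

lemma poly_eq_sum_atMost:
  fixes p :: "'a::comm_semiring_1 poly"
  assumes "degree p \<le> n"
  shows "poly p x = (\<Sum>i\<le>n. coeff p i * x ^ i)"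
  unfolding poly_altdef using assms by (intro sum.mono_neutral_left) (auto simp: coeff_eq_0)

lemma degree_poly_even_le: "degree p \<le> 2 * n + 1 \<Longrightarrow> degree (poly_even p) \<le> n"
  and degree_poly_odd_le: "degree p \<le> 2 * n + 1 \<Longrightarrow> degree (poly_odd p) \<le> n"
  by (auto intro!: degree_le simp: coeff_eq_0)

lemma degree_fpoly_le: "degree (fpoly al n) \<le> n"
  unfolding fpoly_def using degree_prod_sum_le[of "{1..n}" "\<lambda>j. [:- al j, 1:]"]
  by (simp add: o_def)

lemma Hfun_mucoef:
  assumes "degree p \<le> 2 * h + 1"
  shows "Hfun h (mucoef (2 * h + 1) p) x1 x2
           = 2 * poly (poly_even p) (x1 * x2) + (x1 + x2) * poly (poly_odd p) (x1 * x2)"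
proof -
  have "mucoef (2 * h + 1) p (4 * h + 2 - 4 * i) = coeff p (2 * i)"
       "mucoef (2 * h + 1) p (4 * h - 4 * i) = coeff p (2 * i + 1)" if "i \<le> h" for i
  proof -
    have "4 * h + 2 - 4 * i = 2 * (2 * h + 1 - 2 * i)" "4 * h - 4 * i = 2 * (2 * h - 2 * i)"
      using that by auto
    then show "mucoef (2 * h + 1) p (4 * h + 2 - 4 * i) = coeff p (2 * i)"
      "mucoef (2 * h + 1) p (4 * h - 4 * i) = coeff p (2 * i + 1)"
      using that by (simp_all add: mucoef_def)
  qed
  then have "Hfun h (mucoef (2 * h + 1) p) x1 x2
      = (\<Sum>i\<le>h. (x1 * x2) ^ i * (2 * coeff p (2 * i) + coeff p (2 * i + 1) * (x1 + x2)))"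
    unfolding Hfun_def atLeast0AtMost by (intro sum.cong) auto
  also have "\<dots> = 2 * poly (poly_even p) (x1 * x2) + (x1 + x2) * poly (poly_odd p) (x1 * x2)"
    using assms
    by (simp add: poly_eq_sum_atMost[OF degree_poly_even_le]
        poly_eq_sum_atMost[OF degree_poly_odd_le] sum.distrib sum_distrib_left algebra_simps)
  finally show ?thesis .
qed

lemma Hfun_square_factor:
  fixes f :: "complex poly"
  assumes "g \<ge> 1" and "degree f \<le> 2 * g - 1"
  shows "Hfun g (mucoef (2 * g + 1) ([:- a, 1:]^2 * f)) x1 x2
           = (x1 - a) * (x2 - a) * Hfun (g - 1) (mucoef (2 * g - 1) f) x1 x2
             + a * (x1 - x2)^2 * poly (poly_odd f) (x1 * x2)"
proof -
  obtain h where g: "g = Suc h"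
    using assms(1) by (cases g) auto
  have "degree ([:- a, 1:]^2 * f) \<le> 2 * g + 1"
    using assms degree_mult_le[of "[:- a, 1:]^2" f] degree_power_le[of "[:- a, 1:]" 2] by auto
  then have "Hfun g (mucoef (2 * g + 1) ([:- a, 1:]^2 * f)) x1 x2
      = 2 * poly (poly_even ([:- a, 1:]^2 * f)) (x1 * x2)
        + (x1 + x2) * poly (poly_odd ([:- a, 1:]^2 * f)) (x1 * x2)"
    using Hfun_mucoef[of "[:- a, 1:]^2 * f" g] by (simp add: g)
  moreover have "Hfun (g - 1) (mucoef (2 * g - 1) f) x1 x2
      = 2 * poly (poly_even f) (x1 * x2) + (x1 + x2) * poly (poly_odd f) (x1 * x2)"
    using Hfun_mucoef[of f h] assms(2) by (simp add: g)
  ultimately show ?thesis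
    unfolding poly_even_odd_square_factor by (simp add: power2_eq_square algebra_simps)
qed

lemma power_mult_poly_odd_inverse:
  fixes p :: "complex poly"
  assumes "degree p \<le> 2 * n + 1" and "w \<noteq> 0"
  shows "w ^ n * poly (poly_odd p) (1 / w) = (\<Sum>k=0..n. mucoef (2 * n + 1) p (4 * k) * w ^ k)"
proof -
  have "w ^ n * poly (poly_odd p) (1 / w) = (\<Sum>i=0..n. coeff p (2 * i + 1) * w ^ (n - i))"
    using assms
    by (auto simp: poly_eq_sum_atMost[OF degree_poly_odd_le] atLeast0AtMost sum_distrib_left
        power_diff power_divide intro!: sum.cong)
  also have "\<dots> = (\<Sum>k=0..n. coeff p (2 * (n - k) + 1) * w ^ k)"
    by (subst sum.atLeastAtMost_rev) (auto intro!: sum.cong)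
  also have "\<dots> = (\<Sum>k=0..n. mucoef (2 * n + 1) p (4 * k) * w ^ k)"
  proof (intro sum.cong refl)
    fix k assume "k \<in> {0..n}"
    then have "4 * k = 2 * (2 * k)" "2 * n + 1 - 2 * k = 2 * (n - k) + 1"
      by auto
    then show "coeff p (2 * (n - k) + 1) * w ^ k = mucoef (2 * n + 1) p (4 * k) * w ^ k"
      by (simp add: mucoef_def)
  qed
  finally show ?thesis .
qed

section \<open>The generating series of the Schur polynomials\<close>

definition schur_fps :: "(nat \<Rightarrow> complex) \<Rightarrow> complex fps" where
  "schur_fps t = fps_exp 1 oo Abs_fps (\<lambda>n. if n = 0 then 0 else t n)"

lemma schur_of_nat: "schur t (int n) = schur_fps t $ n"
  by (simp add: schur_def schur_fps_def)

lemma schur_neg: "m < 0 \<Longrightarrow> schur t m = 0"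
  by (simp add: schur_def)

lemma square_fps_exp_compose_mult_eq_1:
  fixes L P :: "'a::field_char_0 fps"
  assumes "L $ 0 = 0" and "P $ 0 = 1" and "2 * fps_deriv L * P + fps_deriv P = 0"
  shows "(fps_exp 1 oo L)^2 * P = 1"
proof -
  define S where "S = fps_exp 1 oo L"
  have "fps_deriv S = S * fps_deriv L"
    using fps_compose_deriv[OF assms(1), of "fps_exp 1"] by (simp add: S_def)
  then have "fps_deriv (S^2 * P) = S^2 * (2 * fps_deriv L * P + fps_deriv P)"
    by (simp add: fps_deriv_mult fps_deriv_power power2_eq_square algebra_simps)
  then have "S^2 * P = fps_const ((S^2 * P) $ 0)"
    by (simp only: assms(3) mult_zero_right fps_deriv_eq_0_iff)
  also have "(S^2 * P) $ 0 = 1"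
    using assms(1,2) by (simp add: S_def power2_eq_square)
  finally show ?thesis
    by (simp add: S_def)
qed

lemma fps_geometric_shift_mult:
  "Abs_fps (\<lambda>n. c ^ Suc n) * (1 - fps_const c * fps_X) = fps_const (c::'a::comm_ring_1)"
proof -
  have "Abs_fps (\<lambda>n. c ^ Suc n) * (1 - fps_const c * fps_X)
      = Abs_fps (\<lambda>n. c ^ Suc n) - fps_const c * (fps_X * Abs_fps (\<lambda>n. c ^ Suc n))"
    by (simp add: algebra_simps)
  then show ?thesis
    by (intro fps_ext) (auto simp: power_Suc[symmetric] simp del: power_Suc split: nat.split)
qed

lemma fps_deriv_prod_one_minus:
  fixes b :: "'i \<Rightarrow> 'a::comm_ring_1"
  assumes "finite A"
  shows "fps_deriv (\<Prod>j\<in>A. 1 - fps_const (b j) * fps_X)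
           = - (\<Sum>j\<in>A. Abs_fps (\<lambda>n. b j ^ Suc n)) * (\<Prod>j\<in>A. 1 - fps_const (b j) * fps_X)"
  using assms
proof (induction A rule: finite_induct)
  case (insert i A)
  define E where "E = 1 - fps_const (b i) * fps_X"
  define P where "P = (\<Prod>j\<in>A. 1 - fps_const (b j) * fps_X)"
  define R where "R = (\<Sum>j\<in>A. Abs_fps (\<lambda>n. b j ^ Suc n))"
  have "fps_deriv (E * P) = - fps_const (b i) * P + E * (- R * P)"
    using insert by (simp add: fps_deriv_mult E_def P_def R_def)
  also have "\<dots> = - (Abs_fps (\<lambda>n. b i ^ Suc n) * E) * P - R * (E * P)"
    by (simp only: E_def fps_geometric_shift_mult) (simp add: algebra_simps)
  also have "\<dots> = - (Abs_fps (\<lambda>n. b i ^ Suc n) + R) * (E * P)"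
    by (simp add: algebra_simps)
  finally show ?case
    using insert by (simp add: E_def P_def R_def)
qed simp

lemma fps_nth_0_prod: "(\<Prod>j\<in>A. f j :: 'a::comm_semiring_1 fps) $ 0 = (\<Prod>j\<in>A. f j $ 0)"
  by (induction A rule: infinite_finite_induct) auto

lemma square_schur_fps_Lam:
  "schur_fps (Lam al a g)^2
     * ((1 - fps_const a * fps_X)^2 * (\<Prod>j\<in>{1..2*g-1}. 1 - fps_const (al j) * fps_X)) = 1"
proof -
  define L where "L = Abs_fps (\<lambda>n. if n = 0 then 0 else Lam al a g n)"
  define E where "E = 1 - fps_const a * fps_X"
  define Q where "Q = (\<Prod>j\<in>{1..2*g-1}. 1 - fps_const (al j) * fps_X)"
  define R where "R = (\<Sum>j\<in>{1..2*g-1}. Abs_fps (\<lambda>n. al j ^ Suc n))"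
  define G where "G = Abs_fps (\<lambda>n. a ^ Suc n)"
  have dL: "2 * fps_deriv L = 2 * G + R"
    by (intro fps_ext)
       (simp add: L_def G_def R_def Lam_def fps_sum_nth del: of_nat_Suc power_Suc)
  have dQ: "fps_deriv Q = - R * Q"
    unfolding Q_def R_def by (rule fps_deriv_prod_one_minus) simp
  have GE: "G * E = fps_const a"
    unfolding E_def G_def by (rule fps_geometric_shift_mult)
  have dE: "fps_deriv E = - fps_const a"
    by (simp add: E_def)
  have "2 * fps_deriv L * (E^2 * Q) + fps_deriv (E^2 * Q) = 2 * E * Q * (G * E - fps_const a)"
    unfolding dL
    by (simp add: dQ dE fps_deriv_mult fps_deriv_power power2_eq_square algebra_simps
        del: fps_const_neg)
  then have "2 * fps_deriv L * (E^2 * Q) + fps_deriv (E^2 * Q) = 0"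
    by (simp add: GE)
  moreover have "(E^2 * Q) $ 0 = 1"
    by (simp add: E_def Q_def power2_eq_square fps_nth_0_prod)
  ultimately show ?thesis
    using square_fps_exp_compose_mult_eq_1[of L "E^2 * Q"]
    by (simp add: L_def E_def Q_def schur_fps_def)
qed

lemma fps_eq_if_square_eq:
  fixes B S :: "'a::{idom,ring_char_0} fps"
  assumes "B^2 = S^2" and "B $ 0 = S $ 0" and "S $ 0 \<noteq> 0"
  shows "B = S"
proof -
  have "(B - S) * (B + S) = 0"
    using assms(1) by (simp add: power2_eq_square algebra_simps)
  moreover have "(B + S) $ 0 \<noteq> 0"
    using assms(2,3) by (simp flip: mult_2)
  then have "B + S \<noteq> 0"
    by (metis fps_add_nth fps_zero_nth)
  ultimately show ?thesis
    by simp
qed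

lemma eventually_one_minus_prod_neq_0:
  fixes g :: nat and al :: "nat \<Rightarrow> complex"
  shows "eventually (\<lambda>u. (1 - a * u) * (\<Prod>j\<in>{1..2*g-1}. 1 - al j * u) \<noteq> 0) (nhds 0)"
proof -
  have "open {u. (1 - a * u) * (\<Prod>j\<in>{1..2*g-1}. 1 - al j * u) \<noteq> 0}"
    by (intro open_Collect_neq continuous_intros)
  then have "eventually (\<lambda>u. u \<in> {u. (1 - a * u) * (\<Prod>j\<in>{1..2*g-1}. 1 - al j * u) \<noteq> 0})
      (nhds 0)"
    by (rule eventually_nhds_in_open) simp
  then show ?thesis
    by simp
qed

lemma has_fps_expansion_schur_fps_Lam:
  "(\<lambda>u. 1 / ((1 - a * u) * csqrt (\<Prod>j\<in>{1..2*g-1}. 1 - al j * u)))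
     has_fps_expansion schur_fps (Lam al a g)"
proof -
  define p where "p u = (\<Prod>j\<in>{1..2*g-1}. 1 - al j * u)" for u :: complex
  define h where "h u = 1 / ((1 - a * u) * csqrt (p u))" for u
  define G where
    "G = (1 - fps_const a * fps_X)^2 * (\<Prod>j\<in>{1..2*g-1}. 1 - fps_const (al j) * fps_X)"
  define B where "B = fps_expansion h 0"
  define S where "S = schur_fps (Lam al a g)"
  have p0: "p 0 = 1"
    by (simp add: p_def)
  have "h analytic_on {0}"
    unfolding h_def p_def by (intro analytic_intros) (auto simp: p0[unfolded p_def])
  then have hB: "h has_fps_expansion B"
    unfolding B_def by (rule analytic_at_imp_has_fps_expansion_0)
  have hG: "(\<lambda>u. (1 - a * u)^2 * p u) has_fps_expansion G"
    unfolding G_def p_def by (intro fps_expansion_intros)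
  have hBG: "(\<lambda>u. h u ^ 2 * ((1 - a * u)^2 * p u)) has_fps_expansion B^2 * G"
    using hB hG by (rule has_fps_expansion_mult[OF has_fps_expansion_power])
  have "eventually (\<lambda>u. (1 - a * u) * p u \<noteq> 0) (nhds 0)"
    unfolding p_def by (rule eventually_one_minus_prod_neq_0)
  then have ev: "eventually (\<lambda>u. h u ^ 2 * ((1 - a * u)^2 * p u) = 1) (nhds 0)"
    by eventually_elim (simp add: h_def power_divide power_mult_distrib)
  have "(\<lambda>_. 1) has_fps_expansion B^2 * G"
    by (rule iffD1[OF has_fps_expansion_cong[OF ev refl] hBG])
  then have BG: "B^2 * G = 1"
    using fps_expansion_unique_complex has_fps_expansion_1 by blast
  have SG: "S^2 * G = 1"
    unfolding S_def G_def by (rule square_schur_fps_Lam)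
  have "B^2 = B^2 * (S^2 * G)"
    by (simp only: SG mult_1_right)
  also have "\<dots> = S^2 * (B^2 * G)"
    by (simp only: mult_ac)
  also have "\<dots> = S^2"
    by (simp only: BG mult_1_right)
  finally have "B^2 = S^2" .
  moreover have "B $ 0 = 1"
    using has_fps_expansion_imp_0_eq_fps_nth_0[OF hB] p0 by (simp add: h_def)
  moreover have "S $ 0 = 1"
    by (simp add: S_def schur_fps_def)
  ultimately have "B = S"
    using fps_eq_if_square_eq[of B S] by simp
  with hB show ?thesis
    unfolding S_def h_def p_def by simp
qed

lemma eventually_has_sum_fps_expansion:
  fixes F :: "complex fps"
  assumes "f has_fps_expansion F"
  shows "eventually (\<lambda>u. ((\<lambda>n. F $ n * u ^ n) has_sum f u) UNIV) (nhds 0)"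
proof -
  have "eventually (\<lambda>u. u \<in> eball 0 (fps_conv_radius F)) (nhds 0)"
    using assms
    by (intro eventually_nhds_in_open) (auto simp: has_fps_expansion_def zero_ereal_def)
  moreover have "eventually (\<lambda>u. eval_fps F u = f u) (nhds 0)"
    using assms by (simp add: has_fps_expansion_def)
  ultimately show ?thesis
  proof eventually_elim
    case (elim u)
    then have "ereal (norm u) < fps_conv_radius F"
      by simp
    then show ?case
      using sums_eval_fps norm_summable_fps elim(2) by (metis norm_summable_imp_has_sum)
  qed
qed

lemma eventually_has_sum_schur_Lam:
  "eventually (\<lambda>z. (1 - a * z^2) * F0fun al g z \<noteq> 0 \<and>
     ((\<lambda>n. schur (Lam al a g) (int n) * (z^2) ^ n)
        has_sum 1 / ((1 - a * z^2) * F0fun al g z)) UNIV)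
   (nhds 0)"
proof -
  have "eventually (\<lambda>u. (1 - a * u) * (\<Prod>j\<in>{1..2*g-1}. 1 - al j * u) \<noteq> 0 \<and>
      ((\<lambda>n. schur_fps (Lam al a g) $ n * u ^ n)
         has_sum 1 / ((1 - a * u) * csqrt (\<Prod>j\<in>{1..2*g-1}. 1 - al j * u))) UNIV) (nhds 0)"
    using eventually_one_minus_prod_neq_0
      eventually_has_sum_fps_expansion[OF has_fps_expansion_schur_fps_Lam]
    by (rule eventually_conj)
  moreover have "filterlim (\<lambda>z. z^2) (nhds 0) (nhds (0::complex))"
    using tendsto_power[OF filterlim_ident[of "nhds (0::complex)"], of 2] by simp
  ultimately show ?thesis
    by (rule eventually_mono[OF eventually_compose_filterlim])
       (simp add: F0fun_def schur_of_nat)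
qed

section \<open>Uniqueness of double power series\<close>

lemma power_series_eq_0:
  fixes c :: "nat \<Rightarrow> complex"
  assumes "r > 0" and "\<And>w. w \<noteq> 0 \<Longrightarrow> norm w < r \<Longrightarrow> ((\<lambda>n. c n * w ^ n) has_sum 0) UNIV"
  shows "c n = 0"
proof -
  define \<phi> where "\<phi> w = (if w = 0 then c 0 else 0)" for w :: complex
  have "eventually (\<lambda>w. w \<in> ball 0 r) (nhds 0)"
    using assms(1) by (intro eventually_nhds_in_open) auto
  then have "eventually (\<lambda>w. (\<lambda>n. Abs_fps c $ n * w ^ n) sums \<phi> w) (nhds 0)"
  proof eventually_elim
    case (elim w)
    then show ?case
      using assms(2)[of w] powser_sums_zero[of c] by (auto simp: \<phi>_def intro: has_sum_imp_sums)
  qed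
  then have exp: "\<phi> has_fps_expansion Abs_fps c"
    by (rule has_fps_expansionI)
  have "(\<phi> \<longlongrightarrow> \<phi> 0) (at 0)"
    using has_fps_expansion_imp_continuous[OF exp, of UNIV] by (simp add: continuous_at)
  moreover have "(\<phi> \<longlongrightarrow> 0) (at 0)"
    by (rule tendsto_eventually) (auto simp: eventually_at_filter \<phi>_def)
  ultimately have "\<phi> 0 = 0"
    by (rule tendsto_unique[OF at_neq_bot])
  then have "\<phi> = (\<lambda>_. 0)"
    by (auto simp: \<phi>_def)
  with exp have "Abs_fps c = 0"
    using fps_expansion_unique_complex has_fps_expansion_0 by blast
  then have "Abs_fps c $ n = 0"
    by simp
  then show ?thesis
    by simp
qed

lemma double_power_series_rows_eq_0:
  fixes d :: "nat \<Rightarrow> nat \<Rightarrow> complex"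
  assumes "z2 \<noteq> 0"
    and "\<And>z1. z1 \<noteq> 0 \<Longrightarrow> norm z1 < norm z2
           \<Longrightarrow> ((\<lambda>(i,j). d i j * z1 ^ i * z2 ^ j) has_sum 0) UNIV"
  shows "((\<lambda>j. d i j * z2 ^ j) has_sum 0) UNIV"
proof -
  define \<rho> where "\<rho> k = (\<Sum>\<^sub>\<infinity>j. d k j * z2 ^ j)" for k
  have rows: "(\<lambda>j. d k j * z2 ^ j) summable_on UNIV" (is ?rows)
    and col: "((\<lambda>k. \<rho> k * z1 ^ k) has_sum 0) UNIV" (is ?col)
    if "z1 \<noteq> 0" "norm z1 < norm z2" for z1 k
  proof -
    have hs: "((\<lambda>(k,j). d k j * z1 ^ k * z2 ^ j) has_sum 0) (UNIV \<times> UNIV)"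
      using assms(2) that by simp
    have "(\<lambda>j. z1 ^ k * (d k j * z2 ^ j)) summable_on UNIV" for k
      using summable_on_SigmaD1[OF has_sum_imp_summable[OF hs], of k] by (simp add: mult_ac)
    then have summable_row: "(\<lambda>j. d k j * z2 ^ j) summable_on UNIV" for k
      using summable_on_cmult_right' that(1) by (metis power_not_zero)
    then show ?rows .
    have "((\<lambda>j. d k j * z1 ^ k * z2 ^ j) has_sum \<rho> k * z1 ^ k) UNIV" for k
      using has_sum_cmult_right[OF has_sum_infsum[OF summable_row[of k]], of "z1 ^ k"]
      by (simp add: \<rho>_def mult_ac)
    then show ?col
      using has_sum_Sigma'[OF hs] by simp
  qed
  have "\<rho> k = 0" for k
    using assms(1) by (intro power_series_eq_0[of "norm z2"]) (auto intro: col)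
  then show ?thesis
    using has_sum_infsum[OF rows[of "z2 / 2"]] assms(1) by (simp add: \<rho>_def norm_divide)
qed

lemma double_power_series_eq_0:
  fixes d :: "nat \<Rightarrow> nat \<Rightarrow> complex"
  assumes "r > 0"
    and "\<And>z1 z2. z1 \<noteq> 0 \<Longrightarrow> norm z1 < norm z2 \<Longrightarrow> norm z2 < r
           \<Longrightarrow> ((\<lambda>(i,j). d i j * z1 ^ i * z2 ^ j) has_sum 0) UNIV"
  shows "d i j = 0"
  using assms by (intro power_series_eq_0[of r] double_power_series_rows_eq_0) auto

definition has_double_expansion ::
  "(complex \<Rightarrow> complex \<Rightarrow> complex) \<Rightarrow> (nat \<Rightarrow> nat \<Rightarrow> complex) \<Rightarrow> bool" where
  "has_double_expansion f q \<longleftrightarrow> (\<exists>r>0. \<forall>z1 z2. z1 \<noteq> 0 \<and> z2 \<noteq> 0 \<and> norm z1 < r \<and> norm z2 < r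
      \<and> z1^2 \<noteq> z2^2 \<longrightarrow>
     ((\<lambda>(i,j). q i j * z1 ^ (i - 1) * z2 ^ (j - 1)) has_sum f z1 z2) ({1..} \<times> {1..}))"

lemma has_double_expansionI:
  assumes "eventually P (nhds 0)"
    and "\<And>z1 z2. P z1 \<Longrightarrow> P z2 \<Longrightarrow> z1 \<noteq> 0 \<Longrightarrow> z2 \<noteq> 0 \<Longrightarrow> z1^2 \<noteq> z2^2
           \<Longrightarrow> ((\<lambda>(i,j). q i j * z1 ^ (i - 1) * z2 ^ (j - 1)) has_sum f z1 z2) ({1..} \<times> {1..})"
  shows "has_double_expansion f q"
proof -
  obtain r where r: "r > 0" "\<And>z. dist z 0 < r \<Longrightarrow> P z"
    using assms(1) unfolding eventually_nhds_metric by blast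
  show ?thesis
    unfolding has_double_expansion_def
  proof (intro exI[of _ r] conjI allI impI)
    fix z1 z2 :: complex
    assume "z1 \<noteq> 0 \<and> z2 \<noteq> 0 \<and> norm z1 < r \<and> norm z2 < r \<and> z1^2 \<noteq> z2^2"
    then show "((\<lambda>(i,j). q i j * z1 ^ (i - 1) * z2 ^ (j - 1)) has_sum f z1 z2) ({1..} \<times> {1..})"
      by (intro assms(2) r(2)) auto
  qed (fact r(1))
qed

lemma has_double_expansion_diff:
  assumes "has_double_expansion f q" and "has_double_expansion f' q'"
  shows "has_double_expansion (\<lambda>z1 z2. f z1 z2 - f' z1 z2) (\<lambda>i j. q i j - q' i j)"
proof -
  obtain r where "r > 0"
    and hq: "\<forall>z1 z2. z1 \<noteq> 0 \<and> z2 \<noteq> 0 \<and> norm z1 < r \<and> norm z2 < r \<and> z1^2 \<noteq> z2^2 \<longrightarrow>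
           ((\<lambda>(i,j). q i j * z1 ^ (i - 1) * z2 ^ (j - 1)) has_sum f z1 z2) ({1..} \<times> {1..})"
    using assms(1) unfolding has_double_expansion_def by blast
  obtain r' where "r' > 0"
    and hq': "\<forall>z1 z2. z1 \<noteq> 0 \<and> z2 \<noteq> 0 \<and> norm z1 < r' \<and> norm z2 < r' \<and> z1^2 \<noteq> z2^2 \<longrightarrow>
           ((\<lambda>(i,j). q' i j * z1 ^ (i - 1) * z2 ^ (j - 1)) has_sum f' z1 z2) ({1..} \<times> {1..})"
    using assms(2) unfolding has_double_expansion_def by blast
  show ?thesis
    unfolding has_double_expansion_def
  proof (intro exI[of _ "min r r'"] conjI allI impI)
    fix z1 z2 :: complex
    assume "z1 \<noteq> 0 \<and> z2 \<noteq> 0 \<and> norm z1 < min r r' \<and> norm z2 < min r r' \<and> z1^2 \<noteq> z2^2"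
    then have "((\<lambda>x. (\<lambda>(i,j). q i j * z1 ^ (i - 1) * z2 ^ (j - 1)) x
                  + - (\<lambda>(i,j). q' i j * z1 ^ (i - 1) * z2 ^ (j - 1)) x)
               has_sum f z1 z2 + - f' z1 z2) ({1..} \<times> {1..})"
      by (intro has_sum_add has_sum_uminusI hq[rule_format] hq'[rule_format]) auto
    then show "((\<lambda>(i,j). (q i j - q' i j) * z1 ^ (i - 1) * z2 ^ (j - 1))
        has_sum f z1 z2 - f' z1 z2) ({1..} \<times> {1..})"
      by (simp add: case_prod_unfold algebra_simps)
  qed (use \<open>r > 0\<close> \<open>r' > 0\<close> in auto)
qed

lemma has_sum_Suc_Suc_iff:
  "((\<lambda>(i,j). q (Suc i) (Suc j) * z1 ^ i * z2 ^ j) has_sum s) UNIV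
     \<longleftrightarrow> ((\<lambda>(i,j). q i j * z1 ^ (i - 1) * z2 ^ (j - 1)) has_sum s) ({1..} \<times> {1..})"
  by (rule has_sum_reindex_bij_witness[of UNIV "map_prod (\<lambda>i. i - 1) (\<lambda>j. j - 1)"
        "map_prod Suc Suc"]) auto

lemma has_double_expansion_unique:
  assumes "has_double_expansion f q" and "has_double_expansion f q'" and "i \<ge> 1" and "j \<ge> 1"
  shows "q i j = q' i j"
proof -
  obtain r where "r > 0"
    and hq: "\<forall>z1 z2. z1 \<noteq> 0 \<and> z2 \<noteq> 0 \<and> norm z1 < r \<and> norm z2 < r \<and> z1^2 \<noteq> z2^2 \<longrightarrow>
           ((\<lambda>(i,j). (q i j - q' i j) * z1 ^ (i - 1) * z2 ^ (j - 1)) has_sum 0) ({1..} \<times> {1..})"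
    using has_double_expansion_diff[OF assms(1,2)] unfolding has_double_expansion_def by auto
  \<comment> \<open>Points with \<open>|z1| < |z2|\<close> avoid the excluded set \<open>z1^2 = z2^2\<close>.\<close>
  have "((\<lambda>(i,j). (q (Suc i) (Suc j) - q' (Suc i) (Suc j)) * z1 ^ i * z2 ^ j) has_sum 0) UNIV"
    if "z1 \<noteq> 0" "norm z1 < norm z2" "norm z2 < r" for z1 z2 :: complex
  proof -
    have "norm (z1^2) < norm (z2^2)"
      unfolding norm_power using that(2) by (simp add: power_strict_mono)
    then have "z1^2 \<noteq> z2^2"
      by auto
    moreover have "z2 \<noteq> 0" "norm z1 < r"
      using that(2,3) norm_ge_zero[of z1] by (auto simp del: norm_ge_zero)
    ultimately have "((\<lambda>(i,j). (q i j - q' i j) * z1 ^ (i - 1) * z2 ^ (j - 1)) has_sum 0)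
        ({1..} \<times> {1..})"
      using hq that by simp
    then show ?thesis
      using has_sum_Suc_Suc_iff[of "\<lambda>i j. q i j - q' i j"] by simp
  qed
  then have "q (Suc i') (Suc j') - q' (Suc i') (Suc j') = 0" for i' j'
    by (rule double_power_series_eq_0[OF \<open>r > 0\<close>,
          of "\<lambda>i j. q (Suc i) (Suc j) - q' (Suc i) (Suc j)"])
  moreover obtain i' j' where "i = Suc i'" "j = Suc j'"
    using assms(3,4) by (cases i; cases j) auto
  ultimately show ?thesis
    by simp
qed

section \<open>Products of power series\<close>

definition odd_coeffs :: "(nat \<Rightarrow> nat \<Rightarrow> 'a::zero) \<Rightarrow> nat \<Rightarrow> nat \<Rightarrow> 'a" where
  "odd_coeffs R i j = (if odd i \<and> odd j then R (i div 2) (j div 2) else 0)"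

lemma has_sum_odd_coeffs:
  fixes R :: "nat \<Rightarrow> nat \<Rightarrow> complex"
  assumes "((\<lambda>(i,j). R i j * (z1^2) ^ i * (z2^2) ^ j) has_sum s) UNIV"
  shows "((\<lambda>(i,j). odd_coeffs R i j * z1 ^ (i - 1) * z2 ^ (j - 1)) has_sum s) ({1..} \<times> {1..})"
proof -
  define Odd :: "(nat \<times> nat) set" where "Odd = {(i, j). odd i \<and> odd j}"
  have "((\<lambda>(i,j). R i j * (z1^2) ^ i * (z2^2) ^ j) has_sum s) UNIV
      \<longleftrightarrow> ((\<lambda>(i,j). odd_coeffs R i j * z1 ^ (i - 1) * z2 ^ (j - 1)) has_sum s) Odd"
    by (rule has_sum_reindex_bij_witness[of UNIV "map_prod (\<lambda>i. i div 2) (\<lambda>j. j div 2)"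
          "map_prod (\<lambda>i. 2 * i + 1) (\<lambda>j. 2 * j + 1)"])
       (auto simp: Odd_def odd_coeffs_def power_mult)
  with assms have "((\<lambda>(i,j). odd_coeffs R i j * z1 ^ (i - 1) * z2 ^ (j - 1)) has_sum s) Odd"
    by simp
  moreover have "Odd \<subseteq> {1..} \<times> {1..}"
    by (auto simp: Odd_def odd_pos Suc_le_eq)
  ultimately show ?thesis
    by (subst (asm) has_sum_cong_neutral) (auto simp: Odd_def odd_coeffs_def)
qed

lemma has_sum_product:
  fixes f :: "'a \<Rightarrow> complex" and g :: "'b \<Rightarrow> complex"
  assumes "countable A" and "countable B" and "(f has_sum a) A" and "(g has_sum b) B"
  shows "((\<lambda>(x,y). f x * g y) has_sum a * b) (A \<times> B)"
proof (rule has_sum_SigmaI[where g = "\<lambda>x. f x * b"])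
  show "((\<lambda>y. (\<lambda>(x,y). f x * g y) (x, y)) has_sum f x * b) B" for x
    using has_sum_cmult_right[OF assms(4)] by simp
  show "((\<lambda>x. f x * b) has_sum a * b) A"
    by (rule has_sum_cmult_left[OF assms(3)])
  have "Infinite_Set_Sum.abs_summable_on f A" and "Infinite_Set_Sum.abs_summable_on g B"
    using has_sum_imp_summable[OF assms(3)] has_sum_imp_summable[OF assms(4)]
    by (simp_all add: summable_on_iff_abs_summable_on_complex flip: abs_summable_equivalent)
  then have "Infinite_Set_Sum.abs_summable_on (\<lambda>(x,y). f x * g y) (A \<times> B)"
    by (rule abs_summable_on_product[OF assms(1,2)])
  then show "(\<lambda>(x,y). f x * g y) summable_on A \<times> B"
    by (simp add: summable_on_iff_abs_summable_on_complex flip: abs_summable_equivalent)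
qed

lemma has_sum_sum:
  fixes f :: "'i \<Rightarrow> 'a \<Rightarrow> 'b::topological_comm_monoid_add"
  assumes "finite K" and "\<And>k. k \<in> K \<Longrightarrow> (f k has_sum s k) A"
  shows "((\<lambda>x. \<Sum>k\<in>K. f k x) has_sum (\<Sum>k\<in>K. s k)) A"
  using assms by (induction K rule: finite_induct) (auto intro: has_sum_add)

lemma has_sum_power_series_shift:
  fixes s :: "int \<Rightarrow> complex"
  assumes "((\<lambda>n. s (int n) * u ^ n) has_sum p) UNIV" and "\<And>m. m < 0 \<Longrightarrow> s m = 0"
  shows "((\<lambda>n. s (int n - int k) * u ^ n) has_sum u ^ k * p) UNIV"
proof -
  have "((\<lambda>n. u ^ k * (s (int n) * u ^ n)) has_sum u ^ k * p) UNIV"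
    by (rule has_sum_cmult_right[OF assms(1)])
  moreover have "((\<lambda>n. u ^ k * (s (int n) * u ^ n)) has_sum u ^ k * p) UNIV
      \<longleftrightarrow> ((\<lambda>n. s (int n - int k) * u ^ n) has_sum u ^ k * p) {k..}"
    by (rule has_sum_reindex_bij_witness[of UNIV "\<lambda>n. n - k" "\<lambda>n. n + k"])
       (auto simp: power_add mult_ac)
  ultimately have "((\<lambda>n. s (int n - int k) * u ^ n) has_sum u ^ k * p) {k..}"
    by simp
  then show ?thesis
    by (subst (asm) has_sum_cong_neutral) (auto simp: assms(2))
qed

lemma has_sum_sum_shifted_products:
  fixes s :: "int \<Rightarrow> complex" and c :: "nat \<Rightarrow> complex"
  assumes "finite K"
    and "((\<lambda>n. s (int n) * u1 ^ n) has_sum p1) UNIV"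
    and "((\<lambda>n. s (int n) * u2 ^ n) has_sum p2) UNIV"
    and "\<And>m. m < 0 \<Longrightarrow> s m = 0"
  shows "((\<lambda>(i,j). (\<Sum>k\<in>K. c k * s (int i - int k) * s (int j - int k)) * u1 ^ i * u2 ^ j)
           has_sum (\<Sum>k\<in>K. c k * (u1 * u2) ^ k) * p1 * p2) UNIV"
proof -
  have "((\<lambda>(i,j). c k * ((s (int i - int k) * u1 ^ i) * (s (int j - int k) * u2 ^ j)))
          has_sum c k * ((u1 ^ k * p1) * (u2 ^ k * p2))) (UNIV \<times> UNIV)" for k
    using has_sum_cmult_right[OF has_sum_product[OF _ _ has_sum_power_series_shift[OF assms(2,4)]
          has_sum_power_series_shift[OF assms(3,4)]]]
    by (simp add: case_prod_unfold)
  then have "((\<lambda>x. \<Sum>k\<in>K. (\<lambda>(i,j). c k * ((s (int i - int k) * u1 ^ i)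
                                          * (s (int j - int k) * u2 ^ j))) x)
          has_sum (\<Sum>k\<in>K. c k * ((u1 ^ k * p1) * (u2 ^ k * p2)))) UNIV"
    using assms(1) by (intro has_sum_sum) auto
  then show ?thesis
    by (simp add: case_prod_unfold sum_distrib_left sum_distrib_right power_mult_distrib mult_ac)
qed

section \<open>The two bidifferentials\<close>

definition expansion_kernel :: "(complex \<Rightarrow> complex \<Rightarrow> complex) \<Rightarrow> (complex \<Rightarrow> complex)
    \<Rightarrow> complex \<Rightarrow> complex \<Rightarrow> complex" where
  "expansion_kernel H y z1 z2 = (let x1 = 1 / z1^2; x2 = 1 / z2^2 in
      (1 / (2 * (x1 - x2)^2) + H x1 x2 / (4 * (x1 - x2)^2 * y z1 * y z2))
        * ((-2 / z1^3) * (-2 / z2^3)) - 1 / (z1 - z2)^2)"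

lemma expansion_iff_has_double_expansion:
  "expansion H y q \<longleftrightarrow> has_double_expansion (expansion_kernel H y) q"
  unfolding expansion_def has_double_expansion_def expansion_kernel_def Let_def ..

lemma expansion_kernel_diff:
  fixes H H' :: "complex \<Rightarrow> complex \<Rightarrow> complex" and y y' :: "complex \<Rightarrow> complex"
  assumes "z1 \<noteq> 0" and "z2 \<noteq> 0" and "z1^2 \<noteq> z2^2"
    and "y' z1 = (1 / z1^2 - a) * y z1" and "y' z2 = (1 / z2^2 - a) * y z2"
    and "y' z1 \<noteq> 0" and "y' z2 \<noteq> 0"
    and "H' (1 / z1^2) (1 / z2^2)
           = (1 / z1^2 - a) * (1 / z2^2 - a) * H (1 / z1^2) (1 / z2^2)
             + a * (1 / z1^2 - 1 / z2^2)^2 * W"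
  shows "expansion_kernel H y z1 z2 - expansion_kernel H' y' z1 z2
           = - a * W / (z1^3 * z2^3 * y' z1 * y' z2)"
proof -
  define x1 x2 where "x1 = 1 / z1^2" and "x2 = 1 / z2^2"
  define D where "D = (x1 - x2)^2"
  have "x1 \<noteq> x2"
    using assms(1-3) by (auto simp: x1_def x2_def field_simps)
  then have "D \<noteq> 0"
    by (simp add: D_def)
  have "y' z1 * y' z2 = (x1 - a) * (x2 - a) * (y z1 * y z2)"
    using assms(4,5) by (simp add: x1_def x2_def)
  moreover have "y' z1 * y' z2 \<noteq> 0"
    using assms(6,7) by simp
  ultimately have "H x1 x2 / (y z1 * y z2) = (x1 - a) * (x2 - a) * H x1 x2 / (y' z1 * y' z2)"
    by (metis mult_divide_mult_cancel_left_if mult.assoc mult_eq_0_iff)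
  then have "H x1 x2 / (y z1 * y z2) - H' x1 x2 / (y' z1 * y' z2)
      = ((x1 - a) * (x2 - a) * H x1 x2 - H' x1 x2) / (y' z1 * y' z2)"
    by (simp add: diff_divide_distrib)
  also have "\<dots> = - a * D * W / (y' z1 * y' z2)"
    using assms(8) by (simp add: x1_def x2_def D_def)
  finally have diff: "H x1 x2 / (y z1 * y z2) - H' x1 x2 / (y' z1 * y' z2)
      = - a * D * W / (y' z1 * y' z2)" .
  have "A / (4 * D * u1 * u2) = A / (u1 * u2) / (4 * D)" for A u1 u2 :: complex
    by (simp add: divide_divide_eq_left mult_ac)
  then have "expansion_kernel H y z1 z2 - expansion_kernel H' y' z1 z2
      = (-2 / z1^3) * (-2 / z2^3) / (4 * D)
        * (H x1 x2 / (y z1 * y z2) - H' x1 x2 / (y' z1 * y' z2))"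
    unfolding expansion_kernel_def Let_def x1_def [symmetric] x2_def [symmetric] D_def [symmetric]
    by (simp add: algebra_simps diff_divide_distrib)
  also have "\<dots> = - a * W / (z1^3 * z2^3 * y' z1 * y' z2)"
    unfolding diff using \<open>D \<noteq> 0\<close> by (simp add: divide_simps)
  finally show ?thesis .
qed

lemma expansion_kernel_diff_square_factor:
  fixes f :: "complex poly" and F :: "complex \<Rightarrow> complex"
  assumes "g \<ge> 1" and "degree f \<le> 2 * g - 1"
    and "z1 \<noteq> 0" and "z2 \<noteq> 0" and "z1^2 \<noteq> z2^2"
    and "(1 - a * z1^2) * F z1 \<noteq> 0" and "(1 - a * z2^2) * F z2 \<noteq> 0"
  defines "y \<equiv> \<lambda>z. F z / z ^ (2 * g - 1)"
    and "y' \<equiv> \<lambda>z. (1 - a * z^2) * F z / z ^ (2 * g + 1)"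
  shows "expansion_kernel (Hfun (g - 1) (mucoef (2 * g - 1) f)) y z1 z2
       - expansion_kernel (Hfun g (mucoef (2 * g + 1) ([:- a, 1:]^2 * f))) y' z1 z2
       = - a * (\<Sum>k=0..g-1. mucoef (2 * g - 1) f (4 * k) * (z1^2 * z2^2) ^ k)
           / ((1 - a * z1^2) * F z1 * ((1 - a * z2^2) * F z2))"
proof -
  obtain n where g: "g = Suc n"
    using assms(1) by (cases g) auto
  define W where "W = poly (poly_odd f) (1 / z1^2 * (1 / z2^2))"
  have y': "y' z = (1 / z^2 - a) * y z" if "z \<noteq> 0" for z
    using that by (simp add: y_def y'_def g field_simps power2_eq_square)
  have z3y': "z^3 * y' z = (1 - a * z^2) * F z / z ^ (2 * n)" if "z \<noteq> 0" for z
    using that by (simp add: y'_def g field_simps eval_nat_numeral)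
  have "expansion_kernel (Hfun (g - 1) (mucoef (2 * g - 1) f)) y z1 z2
       - expansion_kernel (Hfun g (mucoef (2 * g + 1) ([:- a, 1:]^2 * f))) y' z1 z2
      = - a * W / (z1^3 * z2^3 * y' z1 * y' z2)"
  proof (rule expansion_kernel_diff)
    show "y' z1 = (1 / z1^2 - a) * y z1" and "y' z2 = (1 / z2^2 - a) * y z2"
      using y' assms(3,4) by simp_all
    show "y' z1 \<noteq> 0" and "y' z2 \<noteq> 0"
      using assms(3,4,6,7) by (simp_all add: y'_def)
    show "Hfun g (mucoef (2 * g + 1) ([:- a, 1:]^2 * f)) (1 / z1^2) (1 / z2^2)
        = (1 / z1^2 - a) * (1 / z2^2 - a) * Hfun (g - 1) (mucoef (2 * g - 1) f) (1 / z1^2) (1 / z2^2)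
          + a * (1 / z1^2 - 1 / z2^2)^2 * W"
      unfolding W_def by (rule Hfun_square_factor[OF assms(1,2)])
  qed (use assms in auto)
  also have "z1^3 * z2^3 * y' z1 * y' z2 = (z1^3 * y' z1) * (z2^3 * y' z2)"
    by (simp only: mult_ac)
  also have "\<dots> = (1 - a * z1^2) * F z1 * ((1 - a * z2^2) * F z2) / (z1^2 * z2^2) ^ n"
    unfolding z3y'[OF assms(3)] z3y'[OF assms(4)] by (simp add: power_mult power_mult_distrib)
  also have "- a * W / ((1 - a * z1^2) * F z1 * ((1 - a * z2^2) * F z2) / (z1^2 * z2^2) ^ n)
      = - a * (W * (z1^2 * z2^2) ^ n) / ((1 - a * z1^2) * F z1 * ((1 - a * z2^2) * F z2))"
    by simp
  also have "W * (z1^2 * z2^2) ^ n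
      = (\<Sum>k=0..g-1. mucoef (2 * g - 1) f (4 * k) * (z1^2 * z2^2) ^ k)"
    using power_mult_poly_odd_inverse[of f n "z1^2 * z2^2"] assms(2-4)
    by (simp add: W_def g mult.commute)
  finally show ?thesis .
qed

lemma has_double_expansion_kernel_diff:
  fixes g :: nat and al :: "nat \<Rightarrow> complex" and a :: complex
  assumes "g \<ge> 1"
  defines "f \<equiv> fpoly al (2 * g - 1)"
  defines "K \<equiv> \<lambda>z1 z2.
      expansion_kernel (Hfun (g - 1) (mucoef (2 * g - 1) f))
        (\<lambda>z. F0fun al g z / z ^ (2 * g - 1)) z1 z2
    - expansion_kernel (Hfun g (mucoef (2 * g + 1) ([:- a, 1:]^2 * f)))
        (\<lambda>z. (1 - a * z^2) * F0fun al g z / z ^ (2 * g + 1)) z1 z2"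
  defines "R \<equiv> \<lambda>i j. - a * (\<Sum>k=0..g-1. mucoef (2 * g - 1) f (4 * k)
      * schur (Lam al a g) (int i - int k) * schur (Lam al a g) (int j - int k))"
  shows "has_double_expansion K (odd_coeffs R)"
  using eventually_has_sum_schur_Lam
proof (rule has_double_expansionI)
  fix z1 z2 :: complex
  assume z1: "(1 - a * z1^2) * F0fun al g z1 \<noteq> 0 \<and>
      ((\<lambda>n. schur (Lam al a g) (int n) * (z1^2) ^ n)
         has_sum 1 / ((1 - a * z1^2) * F0fun al g z1)) UNIV"
    and z2: "(1 - a * z2^2) * F0fun al g z2 \<noteq> 0 \<and>
      ((\<lambda>n. schur (Lam al a g) (int n) * (z2^2) ^ n)
         has_sum 1 / ((1 - a * z2^2) * F0fun al g z2)) UNIV"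
    and "z1 \<noteq> 0" "z2 \<noteq> 0" "z1^2 \<noteq> z2^2"
  define c where "c k = - a * mucoef (2 * g - 1) f (4 * k)" for k
  define \<phi> where "\<phi> z = 1 / ((1 - a * z^2) * F0fun al g z)" for z
  have "((\<lambda>(i,j). (\<Sum>k\<in>{0..g-1}. c k * schur (Lam al a g) (int i - int k)
                                    * schur (Lam al a g) (int j - int k))
            * (z1^2) ^ i * (z2^2) ^ j)
         has_sum (\<Sum>k\<in>{0..g-1}. c k * (z1^2 * z2^2) ^ k) * \<phi> z1 * \<phi> z2) UNIV"
    using z1 z2 by (intro has_sum_sum_shifted_products) (auto simp: \<phi>_def schur_neg)
  then have "((\<lambda>(i,j). R i j * (z1^2) ^ i * (z2^2) ^ j)
      has_sum (\<Sum>k\<in>{0..g-1}. c k * (z1^2 * z2^2) ^ k) * \<phi> z1 * \<phi> z2) UNIV"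
    by (simp add: R_def c_def sum_distrib_left mult_ac)
  moreover have "(\<Sum>k\<in>{0..g-1}. c k * (z1^2 * z2^2) ^ k) * \<phi> z1 * \<phi> z2 = K z1 z2"
    using z1 z2 \<open>z1 \<noteq> 0\<close> \<open>z2 \<noteq> 0\<close> \<open>z1^2 \<noteq> z2^2\<close> assms(1) degree_fpoly_le
    unfolding K_def f_def
    by (subst expansion_kernel_diff_square_factor)
       (auto simp: c_def f_def \<phi>_def sum_distrib_left sum_divide_distrib mult_ac)
  ultimately have "((\<lambda>(i,j). R i j * (z1^2) ^ i * (z2^2) ^ j) has_sum K z1 z2) UNIV"
    by simp
  then show "((\<lambda>(i,j). odd_coeffs R i j * z1 ^ (i - 1) * z2 ^ (j - 1)) has_sum K z1 z2)
      ({1..} \<times> {1..})"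
    by (rule has_sum_odd_coeffs)
qed

theorem proposition5:
  fixes g :: nat and al :: "nat \<Rightarrow> complex" and a :: complex
    and qg qg1 :: "nat \<Rightarrow> nat \<Rightarrow> complex"
  assumes "g \<ge> 1"
    and "inj_on al {1..2*g-1}" and "a \<notin> al ` {1..2*g-1}"
    and "expansion
           (Hfun g (mucoef (2*g+1) ([:- a, 1:]^2 * fpoly al (2*g-1))))
           (\<lambda>z. (1 - a * z^2) * F0fun al g z / z ^ (2*g+1)) qg"
    and "expansion
           (Hfun (g-1) (mucoef (2*g-1) (fpoly al (2*g-1))))
           (\<lambda>z. F0fun al g z / z ^ (2*g-1)) qg1"
  shows "\<forall>i j. - qg (2*i+1) (2*j+1) + qg1 (2*i+1) (2*j+1)
           = - a * (\<Sum>k=0..g-1. mucoef (2*g-1) (fpoly al (2*g-1)) (4*k)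
                 * schur (Lam al a g) (int i - int k) * schur (Lam al a g) (int j - int k))"
proof -
  let ?f = "fpoly al (2 * g - 1)"
  let ?K = "\<lambda>z1 z2.
      expansion_kernel (Hfun (g - 1) (mucoef (2 * g - 1) ?f))
        (\<lambda>z. F0fun al g z / z ^ (2 * g - 1)) z1 z2
    - expansion_kernel (Hfun g (mucoef (2 * g + 1) ([:- a, 1:]^2 * ?f)))
        (\<lambda>z. (1 - a * z^2) * F0fun al g z / z ^ (2 * g + 1)) z1 z2"
  let ?R = "\<lambda>i j. - a * (\<Sum>k=0..g-1. mucoef (2 * g - 1) ?f (4 * k)
      * schur (Lam al a g) (int i - int k) * schur (Lam al a g) (int j - int k))"
  have "has_double_expansion ?K (\<lambda>i j. qg1 i j - qg i j)"
    using assms(4,5)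
    by (intro has_double_expansion_diff) (simp_all add: expansion_iff_has_double_expansion)
  moreover have "has_double_expansion ?K (odd_coeffs ?R)"
    by (rule has_double_expansion_kernel_diff[OF assms(1)])
  ultimately have "qg1 (2 * i + 1) (2 * j + 1) - qg (2 * i + 1) (2 * j + 1)
      = odd_coeffs ?R (2 * i + 1) (2 * j + 1)" for i j
    by (rule has_double_expansion_unique) simp_all
  then show ?thesis
    by (simp add: odd_coeffs_def)
qed

end
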